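(* Let $\mathcal{T}_3$ be the set of $s\in\mathcal{A}^*$ with $|s|\ne\mathsf{rmin}(s)+1$ such that $\mathrm{sebr}(s)=\mathrm{Rmin}(s)_{\mathsf{rpos}(s)+1}$, $\mathrm{Prm}(s)_{\mathsf{rpos}(s)+1}=\mathrm{Prm}(s)_{\mathsf{rpos}(s)}+1$, and no $\mathcal{M}$asc appears at a position after $\mathrm{Prm}(s)_{\mathsf{rpos}(s)}$. Let $\mathcal{P}_1$ be the set of $s\in\mathcal{A}^*$ with $s_{|s|-1}<s_{|s|}=\mathsf{asc}(s)$. For every $n$ there is a bijection $f_3:\mathcal{T}_3\cap\mathcal{A}_n\to\{s\in\mathcal{A}_n\cap\mathcal{P}_1:\mathsf{rpos}(s)\ne0\}$ such that for all $s$: $\mathsf{asc}(s)=\mathsf{asc}(f_3(s))$, $\mathsf{rep}(s)=\mathsf{rep}(f_3(s))+1$, $\mathsf{max}(s)=\mathsf{max}(f_3(s))$, $\mathsf{rmin}(s)=\mathsf{rmin}(f_3(s))-1$, $\mathsf{rpos}(s)=\mathsf{rpos}(f_3(s))-1$, $\mathsf{zero}(s)=\mathsf{zero}(f_3(s))+\chi(\mathsf{rpos}(s)=0)$ and $\mathsf{ealm}(s)=\mathsf{ealm}(f_3(s))-\chi(\mathrm{Prm}(s)_{\mathsf{rpos}(s)}=\mathsf{max}(s)+1)$.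
   Context: For a sequence $s$, $\mathsf{asc}(s)=|\{i:s_i<s_{i+1}\}|$. An ascent sequence is a sequence $s=(s_1,\dots,s_n)$ of non-negative integers with $s_1=0$, $s_i\le\mathsf{asc}(s_1,\dots,s_{i-1})+1$ for $i\ge2$; $\mathcal{A}_n$ is the set of those of length $n$, $|s|$ the length; $\mathcal{A}^*$ is the set of all ascent sequences except those of the form $(0,1,\dots,|s|-1)$. $\mathsf{rep}(s)=|s|-|\{s_i\}|$; $\mathsf{zero}(s)=|\{i:s_i=0\}|$; $\mathsf{max}(s)=|\{i:s_i=i-1\}|$; $\mathsf{ealm}(s)=s_{\mathsf{max}(s)+1}$ if $\mathsf{max}(s)\ne|s|$, else $0$. A right-to-left minimum is an entry $s_i$ with $s_i<s_j$ for all $j>i$; $\mathsf{rmin}(s)$ is their number; they are indexed $0,\dots,\mathsf{rmin}(s)-1$ from left to right, with values $\mathrm{Rmin}(s)_m$ and positions $\mathrm{Prm}(s)_m$. $\mathsf{rpos}(s)$: $0$ if $\mathsf{rmin}(s)=|s|$; otherwise the maximal $m$ such that the value $\mathrm{Rmin}(s)_m$ occurs at least twice after position $\mathrm{Prm}(s)_{m-1}$ (for $m=0$: at least twice in $s$), and $0$ if none. $\mathrm{sebr}(s)$ is the smallest entry strictly between the two rightmost occurrences of $\mathrm{Rmin}(s)_{\mathsf{rpos}(s)}$, and $0$ if they are adjacent. An entry $s_i$ is an $\mathcal{M}$asc if $s_i=\mathsf{asc}(s_1,\dots,s_{i-1})+1$. $\chi(P)=1$ if $P$ holds, else $0$. 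*)

theory Defs
  imports Main
begin

text \<open>Sequences are lists of naturals; positions are 1-indexed as in the paper:
  sq s i is the i-th entry s_i (1 <= i <= length s).\<close>

definition sq :: "nat list \<Rightarrow> nat \<Rightarrow> nat" where
  "sq s i = s ! (i - 1)"

definition asc :: "nat list \<Rightarrow> nat" where
  "asc s = card {i. Suc i < length s \<and> s ! i < s ! Suc i}"

definition is_ascent :: "nat list \<Rightarrow> bool" where
  "is_ascent s \<longleftrightarrow> s \<noteq> [] \<and> s ! 0 = 0 \<and>
     (\<forall>i. 0 < i \<and> i < length s \<longrightarrow> s ! i \<le> asc (take i s) + 1)"

definition Aseq :: "nat \<Rightarrow> nat list set" where
  "Aseq n = {s. is_ascent s \<and> length s = n}"

definition Astar :: "nat list set" where
  "Astar = {s. is_ascent s \<and> s \<noteq> [0..<length s]}"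

definition rep :: "nat list \<Rightarrow> nat" where
  "rep s = length s - card (set s)"

definition zero :: "nat list \<Rightarrow> nat" where
  "zero s = card {i. 1 \<le> i \<and> i \<le> length s \<and> sq s i = 0}"

definition amax :: "nat list \<Rightarrow> nat" where
  "amax s = card {i. 1 \<le> i \<and> i \<le> length s \<and> sq s i = i - 1}"

definition ealm :: "nat list \<Rightarrow> nat" where
  "ealm s = (if amax s \<noteq> length s then sq s (amax s + 1) else 0)"

definition rmin_positions :: "nat list \<Rightarrow> nat list" where
  "rmin_positions s = filter (\<lambda>i. \<forall>j. i < j \<and> j \<le> length s \<longrightarrow> sq s i < sq s j) [1..<length s + 1]"

definition rmin :: "nat list \<Rightarrow> nat" where
  "rmin s = length (rmin_positions s)"

definition Prm :: "nat list \<Rightarrow> nat \<Rightarrow> nat" where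
  "Prm s m = rmin_positions s ! m"

definition Rmin :: "nat list \<Rightarrow> nat \<Rightarrow> nat" where
  "Rmin s m = sq s (Prm s m)"

definition rpos :: "nat list \<Rightarrow> nat" where
  "rpos s = (if rmin s = length s then 0 else
     (let C = {m. m < rmin s \<and>
                 2 \<le> card {j. (if m = 0 then 0 else Prm s (m - 1)) < j \<and> j \<le> length s
                              \<and> sq s j = Rmin s m}}
      in if C = {} then 0 else Max C))"

text \<open>Smallest entry strictly between the two rightmost occurrences of Rmin(s)_rpos(s);
  0 if they are adjacent (or, by convention, if there is no second occurrence).\<close>
definition sebr :: "nat list \<Rightarrow> nat" where
  "sebr s = (let v = Rmin s (rpos s); p = Prm s (rpos s);
               Q = {j. 1 \<le> j \<and> j < p \<and> sq s j = v}
           in if Q = {} then 0 else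
              (let q = Max Q; E = {sq s j | j. q < j \<and> j < p}
               in if E = {} then 0 else Min E))"

definition is_Masc :: "nat list \<Rightarrow> nat \<Rightarrow> bool" where
  "is_Masc s i \<longleftrightarrow> sq s i = asc (take (i - 1) s) + 1"

definition T3 :: "nat list set" where
  "T3 = {s. s \<in> Astar \<and> length s \<noteq> rmin s + 1 \<and> rpos s + 1 < rmin s \<and>
            sebr s = Rmin s (rpos s + 1) \<and>
            Prm s (rpos s + 1) = Prm s (rpos s) + 1 \<and>
            (\<forall>i. Prm s (rpos s) < i \<and> i \<le> length s \<longrightarrow> \<not> is_Masc s i)}"

definition P1 :: "nat list set" where
  "P1 = {s. s \<in> Astar \<and> sq s (length s - 1) < sq s (length s) \<and> sq s (length s) = asc s}"

definition chi :: "bool \<Rightarrow> int" where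
  "chi P = (if P then 1 else 0)"

end

theory Submission
  imports Defs
begin

text \<open>
  Positions are 0-indexed. For \<open>s \<in> T3\<close> let \<open>P\<close> be the position of the right-to-left minimum
  with index \<open>rpos s\<close>. The conditions defining \<open>T3\<close> say that \<open>P + 1\<close> is the next right-to-left
  minimum and that the smallest entry strictly between \<open>P\<close> and the last earlier occurrence \<open>q\<close>
  of the value \<open>s ! P\<close> is \<open>s ! (P + 1)\<close>. Deleting \<open>s ! P\<close> therefore leaves a sequence \<open>t\<close> in
  which \<open>q\<close> and \<open>P\<close> are consecutive right-to-left minima, all entries between them are at least
  \<open>t ! P\<close> and one of them equals it, and no right-to-left minimum after \<open>P\<close> is repeated; \<open>t\<close> is
  still an ascent sequence because \<open>s\<close> has no Masc after \<open>P\<close>. The bijection maps \<open>s\<close> to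
  \<open>t @ [asc t + 1]\<close>. Conversely, dropping the last entry of \<open>y \<in> P1\<close> gives back \<open>t\<close>, in which
  \<open>rpos y\<close> singles out the consecutive right-to-left minima \<open>q\<close> and \<open>P\<close>, and inserting a copy of
  \<open>t ! q\<close> in front of position \<open>P\<close> recovers \<open>s\<close>.

  The inserted copy adds a repetition and the ascent \<open>t ! q < t ! P\<close>, and
  the appended maximum adds an ascent. In \<open>s\<close> the copy at \<open>P\<close> takes the place of the right-to-left
  minimum \<open>q\<close> of \<open>t\<close>, while \<open>t @ [asc t + 1]\<close> gains a right-to-left minimum at the end that is
  not repeated; so \<open>rmin\<close> and \<open>rpos\<close> both grow by one. Finally \<open>s\<close> has one more zero exactly
  when \<open>t ! q = 0\<close>, i.e. when \<open>q\<close> is the first right-to-left minimum, i.e. when \<open>rpos s = 0\<close>.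
\<close>

section \<open>Ascents\<close>

lemma asc_Nil [simp]: "asc [] = 0"
  by (simp add: asc_def)

lemma asc_singleton [simp]: "asc [a] = 0"
  by (simp add: asc_def)

lemma asc_Cons_Cons: "asc (a # b # xs) = (if a < b then 1 else 0) + asc (b # xs)"
proof -
  let ?S = "\<lambda>l. {i. Suc i < length l \<and> l ! i < l ! Suc i}"
  have split: "?S (a # b # xs) = {i. i = 0 \<and> a < b} \<union> Suc ` ?S (b # xs)"
  proof (rule set_eqI)
    fix i show "i \<in> ?S (a # b # xs) \<longleftrightarrow> i \<in> {i. i = 0 \<and> a < b} \<union> Suc ` ?S (b # xs)"
      by (cases i) auto
  qed
  have "finite (?S (b # xs))"
    by (rule finite_subset[of _ "{..<length (b # xs)}"]) auto
  then have "card (?S (a # b # xs)) = (if a < b then 1 else 0) + card (?S (b # xs))"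
    unfolding split by (subst card_Un_disjoint) (auto simp: card_image)
  then show ?thesis by (simp add: asc_def)
qed

lemma asc_append:
  "asc (xs @ ys) = asc xs + asc ys + (if xs \<noteq> [] \<and> ys \<noteq> [] \<and> last xs < hd ys then 1 else 0)"
proof (induction xs)
  case (Cons a xs)
  show ?case
  proof (cases xs)
    case Nil
    then show ?thesis by (cases ys) (auto simp: asc_Cons_Cons)
  next
    case (Cons b zs)
    then show ?thesis using Cons.IH by (auto simp: asc_Cons_Cons)
  qed
qed simp

lemma asc_snoc: "asc (xs @ [a]) = asc xs + (if xs \<noteq> [] \<and> last xs < a then 1 else 0)"
  by (simp add: asc_append)

lemma asc_insert_before_descent:
  assumes "xs \<noteq> []" "ys \<noteq> []" "v < hd ys" "hd ys \<le> last xs"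
  shows "asc (xs @ v # ys) = asc (xs @ ys) + 1"
  using asc_append[of "xs @ [v]" ys] asc_append[of xs ys] asc_snoc[of xs v] assms by simp

lemma asc_take_mono:
  assumes "i \<le> j"
  shows "asc (take i xs) \<le> asc (take j xs)"
proof -
  have "take j xs = take i xs @ take (j - i) (drop i xs)"
    using assms by (metis le_add_diff_inverse take_add)
  then show ?thesis by (simp add: asc_append)
qed

lemma asc_le_length: "asc xs \<le> length xs - 1"
proof -
  have "{i. Suc i < length xs \<and> xs ! i < xs ! Suc i} \<subseteq> {..<length xs - 1}" by auto
  then show ?thesis unfolding asc_def by (metis card_lessThan card_mono finite_lessThan)
qed

lemma asc_take_Suc:
  assumes "Suc i \<le> length xs"
  shows "asc (take (Suc i) xs) = asc (take i xs) + (if 0 < i \<and> xs ! (i - 1) < xs ! i then 1 else 0)"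
proof -
  have "take (Suc i) xs = take i xs @ [xs ! i]" using assms by (simp add: take_Suc_conv_app_nth)
  moreover have "0 < i \<Longrightarrow> last (take i xs) = xs ! (i - 1)" using assms
    by (cases i) (auto simp: take_Suc_conv_app_nth)
  ultimately show ?thesis by (auto simp: asc_snoc)
qed

lemma asc_take_eq_length_imp_increasing:
  assumes "asc (take i xs) = i - 1" "Suc j < i" "i \<le> length xs"
  shows "xs ! j < xs ! Suc j"
proof -
  let ?S = "{k. Suc k < length (take i xs) \<and> take i xs ! k < take i xs ! Suc k}"
  have "?S \<subseteq> {..<i - 1}" using assms by auto
  moreover have "card ?S = card {..<i - 1}" using assms unfolding asc_def by simp
  ultimately have "?S = {..<i - 1}" by (intro card_subset_eq) auto
  then have "j \<in> ?S" using assms by auto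
  then show ?thesis using assms by simp
qed

lemma ascent_nth_le: "is_ascent x \<Longrightarrow> 0 < i \<Longrightarrow> i < length x \<Longrightarrow> x ! i \<le> asc (take i x) + 1"
  unfolding is_ascent_def by blast

lemma ascent_nth_0: "is_ascent x \<Longrightarrow> x ! 0 = 0"
  unfolding is_ascent_def by blast

lemma is_ascent_take: "is_ascent x \<Longrightarrow> 0 < i \<Longrightarrow> i \<le> length x \<Longrightarrow> is_ascent (take i x)"
  unfolding is_ascent_def by (auto simp: min_def)

lemma ascent_nth_le_asc_take:
  assumes "is_ascent x"
  shows "i \<le> length x \<Longrightarrow> j < i \<Longrightarrow> x ! j \<le> asc (take i x)"
proof (induction i arbitrary: j)
  case (Suc i)
  have mono: "asc (take i x) \<le> asc (take (Suc i) x)" by (rule asc_take_mono) simp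
  show ?case
  proof (cases "j < i")
    case True
    then show ?thesis using Suc mono by fastforce
  next
    case False
    then have j: "j = i" using Suc by simp
    show ?thesis
    proof (cases i)
      case 0
      then show ?thesis using ascent_nth_0[OF assms] j by simp
    next
      case (Suc k)
      have "x ! i \<le> asc (take i x) + 1"
        using ascent_nth_le[OF assms] Suc \<open>Suc i \<le> length x\<close> by simp
      moreover have "x ! k \<le> asc (take i x)" using Suc.IH[of k] \<open>Suc i \<le> length x\<close> Suc by simp
      moreover have "asc (take (Suc i) x) = asc (take i x) + (if x ! k < x ! i then 1 else 0)"
        using asc_take_Suc[of i x] \<open>Suc i \<le> length x\<close> Suc by simp
      ultimately show ?thesis using j by (cases "x ! k < x ! i") auto
    qed
  qed
qed simp

lemma ascent_nth_le_asc: "is_ascent x \<Longrightarrow> j < length x \<Longrightarrow> x ! j \<le> asc x"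
  using ascent_nth_le_asc_take[of x "length x" j] by simp

text \<open>A fixed point \<open>x ! i = i\<close> forces \<open>asc (take i x) = i - 1\<close>, i.e. an ascent at every step
  before it.\<close>
lemma ascent_increasing_before_fixpoint:
  assumes "is_ascent x" "i < length x" "x ! i = i" "Suc j \<le> i"
  shows "x ! j < x ! Suc j"
proof -
  have "x ! i \<le> asc (take i x) + 1"
    using ascent_nth_le[OF assms(1), of i] assms by simp
  moreover have "asc (take i x) \<le> i - 1"
    using asc_le_length[of "take i x"] assms by simp
  ultimately have full: "asc (take i x) = i - 1" using assms by linarith
  show ?thesis
  proof (cases "Suc j < i")
    case True
    then show ?thesis using asc_take_eq_length_imp_increasing[OF full] assms by simp
  next
    case False
    then have ji: "Suc j = i" using assms by simp
    show ?thesis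
    proof (cases j)
      case 0
      then show ?thesis using ascent_nth_0[OF assms(1)] assms ji by simp
    next
      case (Suc k)
      have "x ! j \<le> asc (take j x) + 1"
        using ascent_nth_le[OF assms(1), of j] assms ji Suc by simp
      moreover have "asc (take j x) \<le> j - 1"
        using asc_le_length[of "take j x"] assms ji by simp
      ultimately show ?thesis using assms ji Suc by simp
    qed
  qed
qed

lemma neq_upt_if_nth_eq:
  assumes "i < j" "j < length x" "x ! i = x ! j"
  shows "x \<noteq> [0..<length x]"
proof
  assume "x = [0..<length x]"
  then have "x ! k = k" if "k < length x" for k using that by (metis add_0 diff_zero length_upt nth_upt)
  then show False using assms by simp
qed

lemma ascent_fixpoints_before_descent:
  assumes "is_ascent x" "0 < p" "p < length x" "x ! p \<le> x ! (p - 1)"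
  shows "{i. i < length x \<and> x ! i = i} = {i. i < p \<and> x ! i = i}"
proof -
  have "i < p" if "i < length x" "x ! i = i" for i
  proof (rule ccontr)
    assume "\<not> i < p"
    then have "x ! (p - 1) < x ! Suc (p - 1)"
      using ascent_increasing_before_fixpoint[OF assms(1) that, of "p - 1"] assms(2) by simp
    then show False using assms(2,4) by simp
  qed
  then show ?thesis using assms(3) by auto
qed

lemma amax_eq_card_fixpoints: "amax x = card {i. i < length x \<and> x ! i = i}"
proof -
  have "{i. 1 \<le> i \<and> i \<le> length x \<and> sq x i = i - 1} = Suc ` {i. i < length x \<and> x ! i = i}"
    by (auto simp: sq_def image_iff gr0_conv_Suc Suc_le_eq)
  then show ?thesis unfolding amax_def by (simp add: card_image)
qed

lemma zero_eq_length_filter: "zero x = length (filter (\<lambda>a. a = 0) x)"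
proof -
  have "{i. 1 \<le> i \<and> i \<le> length x \<and> sq x i = 0} = Suc ` {i. i < length x \<and> x ! i = 0}"
    by (auto simp: sq_def image_iff gr0_conv_Suc Suc_le_eq)
  then show ?thesis unfolding zero_def by (simp add: card_image length_filter_conv_card)
qed

section \<open>Right-to-left minima\<close>

definition rl_min :: "nat list \<Rightarrow> nat \<Rightarrow> bool" where
  "rl_min x i \<longleftrightarrow> (\<forall>j. i < j \<and> j < length x \<longrightarrow> x ! i < x ! j)"

definition rl_mins :: "nat list \<Rightarrow> nat list" where
  "rl_mins x = filter (rl_min x) [0..<length x]"

text \<open>For \<open>i = rl_mins x ! m\<close> this is the condition in the definition of \<open>rpos\<close>, 0-indexed: the
  value \<open>Rmin x m\<close> occurs once more after the right-to-left minimum preceding it.\<close>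
definition rl_min_repeated :: "nat list \<Rightarrow> nat \<Rightarrow> bool" where
  "rl_min_repeated x i \<longleftrightarrow> (\<exists>j<i. x ! j = x ! i \<and> (\<forall>k. j \<le> k \<and> k < i \<longrightarrow> \<not> rl_min x k))"

lemma rl_min_iff_drop: "rl_min x k \<longleftrightarrow> (\<forall>a\<in>set (drop (Suc k) x). x ! k < a)"
proof
  assume "rl_min x k"
  then show "\<forall>a\<in>set (drop (Suc k) x). x ! k < a"
    unfolding rl_min_def by (auto simp: in_set_conv_nth)
next
  assume h: "\<forall>a\<in>set (drop (Suc k) x). x ! k < a"
  show "rl_min x k" unfolding rl_min_def
  proof (intro allI impI)
    fix j assume j: "k < j \<and> j < length x"
    then have "x ! j \<in> set (drop (Suc k) x)"
      by (auto simp: in_set_conv_nth intro!: exI[of _ "j - Suc k"])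
    then show "x ! k < x ! j" using h by blast
  qed
qed

lemma rl_min_repeated_cong:
  assumes "\<And>j. j \<le> a \<Longrightarrow> x ! j = x' ! j" "\<And>k. k < a \<Longrightarrow> rl_min x k \<longleftrightarrow> rl_min x' k"
  shows "rl_min_repeated x a \<longleftrightarrow> rl_min_repeated x' a"
proof -
  have "(x ! j = x ! a \<and> (\<forall>k. j \<le> k \<and> k < a \<longrightarrow> \<not> rl_min x k)) \<longleftrightarrow>
        (x' ! j = x' ! a \<and> (\<forall>k. j \<le> k \<and> k < a \<longrightarrow> \<not> rl_min x' k))" if "j < a" for j
    using assms that by auto
  then show ?thesis unfolding rl_min_repeated_def by blast
qed

lemma rmin_positions_eq_map_Suc_rl_mins: "rmin_positions x = map Suc (rl_mins x)"
proof -
  have shift: "(\<forall>j. Suc i < j \<and> j \<le> length x \<longrightarrow> sq x (Suc i) < sq x j) \<longleftrightarrow> rl_min x i" for i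
  proof
    assume h: "\<forall>j. Suc i < j \<and> j \<le> length x \<longrightarrow> sq x (Suc i) < sq x j"
    show "rl_min x i" unfolding rl_min_def
    proof (intro allI impI)
      fix j assume "i < j \<and> j < length x"
      then show "x ! i < x ! j" using h[rule_format, of "Suc j"] by (simp add: sq_def)
    qed
  next
    assume h: "rl_min x i"
    show "\<forall>j. Suc i < j \<and> j \<le> length x \<longrightarrow> sq x (Suc i) < sq x j"
    proof (intro allI impI)
      fix j assume "Suc i < j \<and> j \<le> length x"
      then have "i < j - 1 \<and> j - 1 < length x" by linarith
      then show "sq x (Suc i) < sq x j" using h unfolding rl_min_def sq_def by simp
    qed
  qed
  have "[1..<length x + 1] = map Suc [0..<length x]" by (simp add: map_Suc_upt)
  then show ?thesis unfolding rmin_positions_def rl_mins_def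
    by (simp add: filter_map comp_def shift)
qed

lemma rmin_eq_length_rl_mins: "rmin x = length (rl_mins x)"
  by (simp add: rmin_def rmin_positions_eq_map_Suc_rl_mins)

lemma Prm_eq_rl_mins_nth: "m < length (rl_mins x) \<Longrightarrow> Prm x m = Suc (rl_mins x ! m)"
  by (simp add: Prm_def rmin_positions_eq_map_Suc_rl_mins)

lemma Rmin_eq_rl_mins_nth: "m < length (rl_mins x) \<Longrightarrow> Rmin x m = x ! (rl_mins x ! m)"
  by (simp add: Rmin_def Prm_eq_rl_mins_nth sq_def)

lemma sorted_rl_mins: "sorted_wrt (<) (rl_mins x)"
  unfolding rl_mins_def by (rule sorted_wrt_filter) simp

lemma distinct_rl_mins: "distinct (rl_mins x)"
  unfolding rl_mins_def by simp

lemma set_rl_mins: "set (rl_mins x) = {i. i < length x \<and> rl_min x i}"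
  unfolding rl_mins_def by auto

lemma rl_mins_nth_less_iff:
  "i < length (rl_mins x) \<Longrightarrow> j < length (rl_mins x) \<Longrightarrow> rl_mins x ! i < rl_mins x ! j \<longleftrightarrow> i < j"
  using sorted_rl_mins[of x] by (metis linorder_neqE_nat not_less_iff_gr_or_eq sorted_wrt_nth_less)

lemma rl_mins_nth: "m < length (rl_mins x) \<Longrightarrow> rl_mins x ! m < length x \<and> rl_min x (rl_mins x ! m)"
  using set_rl_mins[of x] nth_mem[of m "rl_mins x"] by auto

lemma rl_mins_index:
  assumes "rl_min x k" "k < length x"
  obtains i where "i < length (rl_mins x)" "rl_mins x ! i = k"
  using assms set_rl_mins[of x] by (metis (mono_tags, lifting) in_set_conv_nth mem_Collect_eq)

lemma rl_min_before_rl_mins_nth: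
  assumes "m < length (rl_mins x)" "rl_min x k" "k < rl_mins x ! m"
  shows "0 < m \<and> k \<le> rl_mins x ! (m - 1)"
proof -
  have "k < length x" using rl_mins_nth[OF assms(1)] assms by simp
  then obtain i where i: "i < length (rl_mins x)" "rl_mins x ! i = k"
    using assms rl_mins_index by blast
  then have "i < m" using rl_mins_nth_less_iff[OF i(1) assms(1)] assms by simp
  then have "rl_mins x ! i \<le> rl_mins x ! (m - 1)"
  proof (cases "i = m - 1")
    case False
    then have "i < m - 1" using \<open>i < m\<close> by simp
    then show ?thesis
      using rl_mins_nth_less_iff[of i x "m - 1"] i less_imp_diff_less[OF assms(1)] by simp
  qed simp
  then show ?thesis using \<open>i < m\<close> i by simp
qed

lemma exists_rl_min_between_iff:
  assumes "m < length (rl_mins x)"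
  shows "(\<exists>i. k \<le> i \<and> i < rl_mins x ! m \<and> rl_min x i) \<longleftrightarrow> 0 < m \<and> k \<le> rl_mins x ! (m - 1)"
proof
  assume "0 < m \<and> k \<le> rl_mins x ! (m - 1)"
  then show "\<exists>i. k \<le> i \<and> i < rl_mins x ! m \<and> rl_min x i"
    using rl_mins_nth[of "m - 1" x] rl_mins_nth_less_iff[of "m - 1" x m] assms
    by (intro exI[of _ "rl_mins x ! (m - 1)"]) auto
qed (use rl_min_before_rl_mins_nth[OF assms] in force)

lemma exists_rl_min_right_le:
  "j < length x \<Longrightarrow> \<exists>k. j \<le> k \<and> k < length x \<and> rl_min x k \<and> x ! k \<le> x ! j"
proof (induction "length x - j" arbitrary: j rule: less_induct)
  case less
  show ?case
  proof (cases "rl_min x j")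
    case False
    then obtain l where l: "j < l" "l < length x" "x ! l \<le> x ! j"
      unfolding rl_min_def by (auto simp: not_less)
    moreover have "length x - l < length x - j" using l by simp
    ultimately obtain k where "l \<le> k \<and> k < length x \<and> rl_min x k \<and> x ! k \<le> x ! l"
      using less.hyps by blast
    then show ?thesis using l by (intro exI[of _ k]) auto
  qed (use less.prems in blast)
qed

lemma rl_min_value_eq_0_iff:
  assumes "0 \<in> set x" "m < length (rl_mins x)"
  shows "x ! (rl_mins x ! m) = 0 \<longleftrightarrow> m = 0"
proof -
  have first_smallest: "x ! (rl_mins x ! 0) < x ! (rl_mins x ! i)" if "0 < i" "i < length (rl_mins x)" for i
  proof -
    have "0 < length (rl_mins x)" using le_less_trans[OF le0 that(2)] .
    then have "rl_mins x ! 0 < rl_mins x ! i" "rl_min x (rl_mins x ! 0)" "rl_mins x ! i < length x"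
      using rl_mins_nth_less_iff[of 0 x i] rl_mins_nth[of _ x] that by blast+
    then show ?thesis unfolding rl_min_def by blast
  qed
  obtain j where "j < length x" "x ! j = 0" using assms(1) by (auto simp: in_set_conv_nth)
  then obtain k where k: "k < length x" "rl_min x k" "x ! k = 0"
    using exists_rl_min_right_le[of j x] by auto
  then obtain i where i: "i < length (rl_mins x)" "rl_mins x ! i = k" using rl_mins_index by blast
  then have "i = 0" using first_smallest[of i] k by (cases "i = 0") auto
  show ?thesis
  proof
    assume "x ! (rl_mins x ! m) = 0"
    then show "m = 0" using first_smallest[OF _ assms(2)] i k \<open>i = 0\<close> by (metis gr0I not_less0)
  qed (use i k \<open>i = 0\<close> in simp)
qed

lemma two_le_card_iff:
  assumes "finite S" "a \<in> S"
  shows "2 \<le> card S \<longleftrightarrow> (\<exists>b\<in>S. b \<noteq> a)"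
proof -
  have "2 \<le> card S \<longleftrightarrow> \<not> card S \<le> Suc 0" by linarith
  also have "\<dots> \<longleftrightarrow> \<not> (\<forall>x\<in>S. \<forall>y\<in>S. x = y)" using card_le_Suc0_iff_eq[OF assms(1)] by simp
  also have "\<dots> \<longleftrightarrow> (\<exists>b\<in>S. b \<noteq> a)" using assms(2) by metis
  finally show ?thesis .
qed

lemma rl_min_repeated_iff_two_le_card:
  assumes p: "p < length x" "rl_min x p"
  shows "rl_min_repeated x p \<longleftrightarrow>
         2 \<le> card {k. k < length x \<and> x ! k = x ! p \<and> (\<forall>i. k \<le> i \<and> i < p \<longrightarrow> \<not> rl_min x i)}"
    (is "_ \<longleftrightarrow> 2 \<le> card ?K")
proof -
  have "finite ?K" "p \<in> ?K" using p by auto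
  then have "2 \<le> card ?K \<longleftrightarrow> (\<exists>k\<in>?K. k \<noteq> p)" by (rule two_le_card_iff)
  moreover have "(\<exists>k\<in>?K. k \<noteq> p) \<longleftrightarrow> (\<exists>k\<in>?K. k < p)"
  proof -
    have "\<not> p < k" if "k \<in> ?K" for k
      using p(2) that unfolding rl_min_def by auto
    then show ?thesis by (auto simp: nat_neq_iff)
  qed
  moreover have "(\<exists>k\<in>?K. k < p) \<longleftrightarrow> rl_min_repeated x p"
  proof
    assume "\<exists>k\<in>?K. k < p"
    then show "rl_min_repeated x p" unfolding rl_min_repeated_def by auto
  next
    assume "rl_min_repeated x p"
    then obtain j where "j < p" "x ! j = x ! p" "\<forall>k. j \<le> k \<and> k < p \<longrightarrow> \<not> rl_min x k"
      unfolding rl_min_repeated_def by blast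
    then show "\<exists>k\<in>?K. k < p" using p(1) by (intro bexI[of _ j]) auto
  qed
  ultimately show ?thesis by simp
qed

lemma two_occurrences_iff_rl_min_repeated:
  assumes m: "m < length (rl_mins x)"
  shows "2 \<le> card {j. (if m = 0 then 0 else Prm x (m - 1)) < j \<and> j \<le> length x \<and> sq x j = Rmin x m}
         \<longleftrightarrow> rl_min_repeated x (rl_mins x ! m)"
proof -
  define lo where "lo = (if m = 0 then 0 else Prm x (m - 1))"
  define p where "p = rl_mins x ! m"
  define K where "K = {k. k < length x \<and> x ! k = x ! p \<and> (\<forall>i. k \<le> i \<and> i < p \<longrightarrow> \<not> rl_min x i)}"
  have p: "p < length x" "rl_min x p" using rl_mins_nth[OF m] p_def by auto
  have "lo \<le> p"
    using rl_mins_nth_less_iff[of "m - 1" x m] m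
    by (cases m) (simp_all add: lo_def p_def Prm_eq_rl_mins_nth)
  have lo_less_iff: "lo < Suc k \<longleftrightarrow> (\<forall>i. k \<le> i \<and> i < p \<longrightarrow> \<not> rl_min x i)" for k
  proof (cases "k \<le> p")
    case True
    then show ?thesis
      using exists_rl_min_between_iff[OF m, of k] m by (auto simp: lo_def p_def Prm_eq_rl_mins_nth)
  qed (use \<open>lo \<le> p\<close> in auto)
  have "{j. lo < j \<and> j \<le> length x \<and> sq x j = Rmin x m} = Suc ` K"
  proof (rule set_eqI)
    fix j
    show "j \<in> {j. lo < j \<and> j \<le> length x \<and> sq x j = Rmin x m} \<longleftrightarrow> j \<in> Suc ` K"
      using lo_less_iff[of "j - 1"]
      by (cases j) (auto simp: K_def sq_def Rmin_eq_rl_mins_nth[OF m] p_def[symmetric])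
  qed
  then show ?thesis
    using rl_min_repeated_iff_two_le_card[OF p] by (simp add: card_image lo_def p_def K_def)
qed

definition repeated_rl_mins :: "nat list \<Rightarrow> nat set" where
  "repeated_rl_mins x = {m. m < length (rl_mins x) \<and> rl_min_repeated x (rl_mins x ! m)}"

lemma finite_repeated_rl_mins: "finite (repeated_rl_mins x)"
  by (simp add: repeated_rl_mins_def)

lemma rpos_eq_Max_repeated_rl_mins:
  assumes "rmin x \<noteq> length x"
  shows "rpos x = (if repeated_rl_mins x = {} then 0 else Max (repeated_rl_mins x))"
proof -
  have "{m. m < rmin x \<and> 2 \<le> card {j. (if m = 0 then 0 else Prm x (m - 1)) < j \<and> j \<le> length x
                                         \<and> sq x j = Rmin x m}}
      = repeated_rl_mins x"
    unfolding repeated_rl_mins_def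
    by (rule Collect_cong) (metis two_occurrences_iff_rl_min_repeated rmin_eq_length_rl_mins)
  then show ?thesis unfolding rpos_def Let_def using assms by presburger
qed

lemma rpos_eqI:
  assumes "rmin x \<noteq> length x" "m < length (rl_mins x)" "rl_min_repeated x (rl_mins x ! m)"
    "\<And>m'. m < m' \<Longrightarrow> m' < length (rl_mins x) \<Longrightarrow> \<not> rl_min_repeated x (rl_mins x ! m')"
  shows "rpos x = m"
proof -
  have "m \<in> repeated_rl_mins x" using assms by (simp add: repeated_rl_mins_def)
  moreover have "Max (repeated_rl_mins x) = m"
    using assms(2-4) finite_repeated_rl_mins \<open>m \<in> repeated_rl_mins x\<close>
    by (intro Max_eqI) (auto simp: repeated_rl_mins_def not_less[symmetric])
  ultimately show ?thesis using rpos_eq_Max_repeated_rl_mins[OF assms(1)] by auto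
qed

lemma not_rl_min_repeated_above_rpos:
  assumes "rmin x \<noteq> length x" "rpos x < m" "m < length (rl_mins x)"
  shows "\<not> rl_min_repeated x (rl_mins x ! m)"
proof
  assume "rl_min_repeated x (rl_mins x ! m)"
  then have "m \<in> repeated_rl_mins x" using assms by (simp add: repeated_rl_mins_def)
  then have "m \<le> rpos x"
    using rpos_eq_Max_repeated_rl_mins[OF assms(1)] finite_repeated_rl_mins by auto
  then show False using assms(2) by simp
qed

lemma rpos_nonzero_D:
  assumes "rpos x \<noteq> 0"
  shows "rmin x \<noteq> length x \<and> rpos x < length (rl_mins x) \<and> rl_min_repeated x (rl_mins x ! rpos x)"
proof -
  have "rmin x \<noteq> length x" using assms unfolding rpos_def by auto
  then have "repeated_rl_mins x \<noteq> {}" "rpos x = Max (repeated_rl_mins x)"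
    using rpos_eq_Max_repeated_rl_mins[of x] assms by (auto split: if_splits)
  then have "rpos x \<in> repeated_rl_mins x" using Max_in finite_repeated_rl_mins by metis
  then show ?thesis using \<open>rmin x \<noteq> length x\<close> by (simp add: repeated_rl_mins_def)
qed

section \<open>Inserting a copy of a right-to-left minimum\<close>

lemma upt_split: "i \<le> j \<Longrightarrow> j \<le> k \<Longrightarrow> [i..<k] = [i..<j] @ [j..<k]"
  by (metis le_add_diff_inverse upt_add_eq_append)

locale rl_min_insertion =
  fixes t :: "nat list" and q P :: nat
  assumes q_less_P: "q < P" and P_less_length: "P < length t"
    and rl_min_q: "rl_min t q" and rl_min_P: "rl_min t P"
    and between_ge: "\<And>j. q < j \<Longrightarrow> j < P \<Longrightarrow> t ! P \<le> t ! j"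
    and between_hit: "\<exists>j. q < j \<and> j < P \<and> t ! j = t ! P"
begin

definition s :: "nat list" where
  "s = take P t @ t ! q # drop P t"

definition rl_mins_before_q :: "nat list" where
  "rl_mins_before_q = filter (rl_min t) [0..<q]"

definition rl_mins_after_P :: "nat list" where
  "rl_mins_after_P = filter (rl_min t) [Suc P..<length t]"

definition r :: nat where
  "r = length rl_mins_before_q"

lemma value_q_less_value_P: "t ! q < t ! P"
  using q_less_P P_less_length rl_min_q unfolding rl_min_def by auto

lemma Suc_q_less_P: "Suc q < P"
  using between_hit by auto

lemma value_before_P: "t ! P \<le> t ! (P - 1)" "t ! q < t ! (P - 1)"
proof -
  show "t ! P \<le> t ! (P - 1)" using between_ge[of "P - 1"] Suc_q_less_P by simp
  then show "t ! q < t ! (P - 1)" using value_q_less_value_P by simp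
qed

lemma length_s: "length s = Suc (length t)"
  using P_less_length by (simp add: s_def)

lemma s_nth_less: "i < P \<Longrightarrow> s ! i = t ! i"
  using P_less_length by (simp add: s_def nth_append)

lemma s_nth_P: "s ! P = t ! q"
  using P_less_length by (simp add: s_def nth_append)

lemma s_nth_Suc: "P \<le> k \<Longrightarrow> s ! Suc k = t ! k"
  using P_less_length by (simp add: s_def nth_append nth_Cons' Suc_diff_le)

lemma s_nth_greater: "P < i \<Longrightarrow> s ! i = t ! (i - 1)"
  using s_nth_Suc[of "i - 1"] by simp

lemma take_s: "i \<le> P \<Longrightarrow> take i s = take i t"
  using P_less_length by (simp add: s_def take_append)

lemma drop_Suc_P_s: "drop (Suc P) s = drop P t"
  using P_less_length by (simp add: s_def)

lemma set_s: "set s = set t"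
proof -
  have "t ! q \<in> set t" using q_less_P P_less_length by simp
  moreover have "set t = set (take P t) \<union> set (drop P t)"
    by (metis append_take_drop_id set_append)
  ultimately show ?thesis by (auto simp: s_def)
qed

lemma not_rl_min_t_between: "q < k \<Longrightarrow> k < P \<Longrightarrow> \<not> rl_min t k"
  using between_ge[of k] P_less_length unfolding rl_min_def by force

lemma rl_min_s_iff: "k < q \<Longrightarrow> rl_min s k \<longleftrightarrow> rl_min t k"
proof -
  assume k: "k < q"
  have "set (drop (Suc k) s) = insert (t ! q) (set (drop (Suc k) t))"
  proof -
    have "drop (Suc k) s = drop (Suc k) (take P t) @ t ! q # drop P t"
      using k q_less_P P_less_length by (simp add: s_def)
    moreover have "drop (Suc k) t = drop (Suc k) (take P t) @ drop P t"
      using k q_less_P P_less_length drop_append[of "Suc k" "take P t" "drop P t"] by simp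
    ultimately show ?thesis by auto
  qed
  moreover have "t ! q \<in> set (drop (Suc k) t)"
    using k q_less_P P_less_length by (auto simp: in_set_conv_nth intro!: exI[of _ "q - Suc k"])
  ultimately show ?thesis
    unfolding rl_min_iff_drop using s_nth_less[of k] k q_less_P by (simp add: insert_absorb)
qed

lemma not_rl_min_s_q: "\<not> rl_min s q"
  using s_nth_P s_nth_less[of q] q_less_P length_s P_less_length unfolding rl_min_def by force

lemma not_rl_min_s_between:
  assumes "q < k" "k < P"
  shows "\<not> rl_min s k"
proof
  assume "rl_min s k"
  then have "s ! k < s ! Suc P" using assms length_s P_less_length unfolding rl_min_def by simp
  then show False using s_nth_Suc[of P] s_nth_less[of k] between_ge[OF assms] assms by simp
qed

lemma rl_min_s_P: "rl_min s P"
  unfolding rl_min_iff_drop drop_Suc_P_s s_nth_P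
  using rl_min_P value_q_less_value_P P_less_length
  by (auto simp: rl_min_iff_drop Cons_nth_drop_Suc[symmetric])

lemma rl_min_s_Suc_iff: "P \<le> k \<Longrightarrow> rl_min s (Suc k) \<longleftrightarrow> rl_min t k"
proof -
  assume "P \<le> k"
  then have "drop (Suc (Suc k)) s = drop (Suc k) t"
    using P_less_length by (simp add: s_def Suc_diff_le)
  then show ?thesis unfolding rl_min_iff_drop using s_nth_Suc[OF \<open>P \<le> k\<close>] by simp
qed

lemma rl_mins_t: "rl_mins t = rl_mins_before_q @ q # P # rl_mins_after_P"
proof -
  have "[0..<length t] = [0..<q] @ q # [Suc q..<P] @ P # [Suc P..<length t]"
    using q_less_P P_less_length upt_split[of 0 q "length t"] upt_split[of q P "length t"]
    by (simp add: upt_conv_Cons)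
  moreover have "filter (rl_min t) [Suc q..<P] = []"
    using not_rl_min_t_between by (auto simp: filter_empty_conv)
  ultimately show ?thesis
    unfolding rl_mins_def rl_mins_before_q_def rl_mins_after_P_def using rl_min_q rl_min_P by simp
qed

lemma rl_mins_s: "rl_mins s = rl_mins_before_q @ P # Suc P # map Suc rl_mins_after_P"
proof -
  have "[0..<length s] = [0..<q] @ [q..<P] @ P # map Suc [P..<length t]"
    using q_less_P P_less_length length_s upt_split[of 0 q "Suc (length t)"]
      upt_split[of q P "Suc (length t)"] by (simp add: upt_conv_Cons map_Suc_upt)
  moreover have "filter (rl_min s) [0..<q] = rl_mins_before_q"
    unfolding rl_mins_before_q_def by (rule filter_cong) (auto simp: rl_min_s_iff)
  moreover have "filter (rl_min s) [q..<P] = []"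
    using not_rl_min_s_q not_rl_min_s_between
    by (auto simp: filter_empty_conv le_less)
  moreover have "filter (rl_min t) [P..<length t] = P # rl_mins_after_P"
    unfolding rl_mins_after_P_def using rl_min_P P_less_length by (simp add: upt_conv_Cons)
  moreover have "filter (rl_min s \<circ> Suc) [P..<length t] = filter (rl_min t) [P..<length t]"
    by (rule filter_cong) (auto simp: rl_min_s_Suc_iff)
  ultimately show ?thesis unfolding rl_mins_def using rl_min_s_P by (simp add: filter_map)
qed

lemma length_rl_mins_s: "length (rl_mins s) = length (rl_mins t)"
  by (simp add: rl_mins_s rl_mins_t)

lemma rl_mins_t_nth_r: "rl_mins t ! r = q" "rl_mins t ! Suc r = P"
  by (simp_all add: rl_mins_t r_def nth_append)

lemma rl_mins_s_nth_r: "rl_mins s ! r = P" "rl_mins s ! Suc r = Suc P"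
  by (simp_all add: rl_mins_s r_def nth_append)

lemma Suc_r_less_length: "Suc r < length (rl_mins t)"
  by (simp add: rl_mins_t r_def)

lemma rl_mins_nth_above_r:
  assumes "Suc r < m" "m < length (rl_mins t)"
  obtains b where "rl_mins t ! m = b" "rl_mins s ! m = Suc b" "P < b" "b < length t" "rl_min t b"
proof -
  define i where "i = m - Suc (Suc r)"
  have i: "i < length rl_mins_after_P" "m = Suc (Suc (r + i))"
    using assms by (auto simp: i_def rl_mins_t r_def)
  then have "rl_mins t ! m = rl_mins_after_P ! i" "rl_mins s ! m = Suc (rl_mins_after_P ! i)"
    by (simp_all add: rl_mins_t rl_mins_s r_def nth_append)
  moreover have "rl_mins_after_P ! i \<in> set rl_mins_after_P" using i by simp
  ultimately show ?thesis using that by (auto simp: rl_mins_after_P_def)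
qed

lemma rl_min_repeated_s_P: "rl_min_repeated s P"
  unfolding rl_min_repeated_def
proof (intro exI conjI allI impI)
  show "q < P" "s ! q = s ! P" using q_less_P s_nth_P s_nth_less by simp_all
  fix k assume "q \<le> k \<and> k < P"
  then show "\<not> rl_min s k" using not_rl_min_s_q not_rl_min_s_between by (cases "k = q") auto
qed

lemma not_rl_min_repeated_s_Suc_P: "\<not> rl_min_repeated s (Suc P)"
proof
  assume "rl_min_repeated s (Suc P)"
  then obtain j where "j < Suc P" "\<forall>k. j \<le> k \<and> k < Suc P \<longrightarrow> \<not> rl_min s k"
    unfolding rl_min_repeated_def by blast
  then show False using rl_min_s_P by (simp add: less_Suc_eq_le)
qed

text \<open>The right-to-left minimum \<open>P\<close> of \<open>s\<close> separates \<open>Suc b\<close> from everything left of it, so a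
  repetition of \<open>s ! Suc b\<close> lies in the common suffix \<open>drop P t\<close>.\<close>
lemma rl_min_repeated_s_Suc_iff:
  assumes "P < b" "b < length t"
  shows "rl_min_repeated s (Suc b) \<longleftrightarrow> rl_min_repeated t b"
proof
  assume "rl_min_repeated s (Suc b)"
  then obtain j where j: "j < Suc b" "s ! j = s ! Suc b" "\<forall>k. j \<le> k \<and> k < Suc b \<longrightarrow> \<not> rl_min s k"
    unfolding rl_min_repeated_def by blast
  have "P < j"
  proof (rule ccontr)
    assume "\<not> P < j"
    then show False using j(3)[rule_format, of P] rl_min_s_P assms by simp
  qed
  define i where "i = j - 1"
  have i: "j = Suc i" "P \<le> i" using \<open>P < j\<close> by (auto simp: i_def)
  show "rl_min_repeated t b" unfolding rl_min_repeated_def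
  proof (intro exI conjI allI impI)
    show "i < b" "t ! i = t ! b" using i j s_nth_Suc assms by simp_all
    fix k assume "i \<le> k \<and> k < b"
    then show "\<not> rl_min t k" using j(3)[rule_format, of "Suc k"] i rl_min_s_Suc_iff by simp
  qed
next
  assume "rl_min_repeated t b"
  then obtain j where j: "j < b" "t ! j = t ! b" "\<forall>k. j \<le> k \<and> k < b \<longrightarrow> \<not> rl_min t k"
    unfolding rl_min_repeated_def by blast
  have "P < j"
  proof (rule ccontr)
    assume "\<not> P < j"
    then show False using j(3)[rule_format, of P] rl_min_P assms by simp
  qed
  show "rl_min_repeated s (Suc b)" unfolding rl_min_repeated_def
  proof (intro exI conjI allI impI)
    show "Suc j < Suc b" "s ! Suc j = s ! Suc b" using j s_nth_Suc \<open>P < j\<close> assms by simp_all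
    fix k assume "Suc j \<le> k \<and> k < Suc b"
    then show "\<not> rl_min s k" using j(3) rl_min_s_Suc_iff[of "k - 1"] \<open>P < j\<close> by (cases k) auto
  qed
qed

lemma rmin_s_neq_length: "rmin s \<noteq> length s"
proof -
  have "length (filter (rl_min s) [0..<length s]) < length [0..<length s]"
    using not_rl_min_s_q q_less_P P_less_length length_s by (intro length_filter_less[of q]) auto
  then show ?thesis by (simp add: rmin_eq_length_rl_mins rl_mins_def)
qed

lemma take_P_t_nonempty: "take P t \<noteq> []"
  using P_less_length Suc_q_less_P by (cases t) auto

lemma last_take_P_t: "last (take P t) = t ! (P - 1)"
  using take_P_t_nonempty P_less_length Suc_q_less_P by (simp add: last_conv_nth)

lemma asc_take_Suc_P_s: "asc (take (Suc P) s) = asc (take P t)"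
proof -
  have "take (Suc P) s = take P t @ [t ! q]" using P_less_length by (simp add: s_def take_append)
  then show ?thesis using asc_snoc[of "take P t" "t ! q"] last_take_P_t value_before_P by simp
qed

text \<open>Inserting \<open>t ! q\<close> creates the ascent \<open>t ! q < t ! P\<close> and no descent turns into an ascent,
  because \<open>t ! q < t ! P \<le> t ! (P - 1)\<close>.\<close>
lemma asc_take_s_greater:
  assumes "Suc P < i" "i \<le> length s"
  shows "asc (take i s) = asc (take (i - 1) t) + 1"
proof -
  define c where "c = take (i - Suc P) (drop P t)"
  have "i - P = Suc (i - Suc P)" using assms by simp
  then have take_s: "take i s = take P t @ t ! q # c" using P_less_length assms
    by (simp add: s_def take_append c_def)
  have "i - 1 = P + (i - Suc P)" using assms by simp
  then have take_t: "take (i - 1) t = take P t @ c" unfolding c_def by (simp add: take_add)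
  have "c \<noteq> []" using assms P_less_length length_s by (simp add: c_def)
  moreover have "hd c = t ! P" using \<open>c \<noteq> []\<close> P_less_length by (simp add: c_def hd_take hd_drop_conv_nth)
  ultimately show ?thesis unfolding take_s take_t
    using asc_insert_before_descent take_P_t_nonempty value_q_less_value_P value_before_P last_take_P_t
    by simp
qed

lemma asc_s: "asc s = asc t + 1"
  using asc_take_s_greater[of "length s"] length_s P_less_length by simp

end

section \<open>Appending a new maximal entry\<close>

locale ascent_extension =
  fixes t :: "nat list"
  assumes ascent_t: "is_ascent t"
begin

definition y :: "nat list" where
  "y = t @ [asc t + 1]"

lemma t_nonempty: "t \<noteq> []"
  using ascent_t unfolding is_ascent_def by simp

lemma t_nth_le_asc: "j < length t \<Longrightarrow> t ! j \<le> asc t"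
  using ascent_nth_le_asc[OF ascent_t] by simp

lemma length_y: "length y = Suc (length t)"
  by (simp add: y_def)

lemma y_nth_less: "k < length t \<Longrightarrow> y ! k = t ! k"
  by (simp add: y_def nth_append)

lemma y_nth_last: "y ! length t = asc t + 1"
  by (simp add: y_def)

lemma rl_min_y_iff: "k < length t \<Longrightarrow> rl_min y k \<longleftrightarrow> rl_min t k"
  unfolding rl_min_iff_drop using t_nth_le_asc[of k] by (auto simp: y_def nth_append)

lemma rl_mins_y: "rl_mins y = rl_mins t @ [length t]"
proof -
  have "filter (rl_min y) [0..<length t] = rl_mins t" unfolding rl_mins_def
    by (rule filter_cong) (auto simp: rl_min_y_iff)
  moreover have "rl_min y (length t)" unfolding rl_min_def length_y by simp
  ultimately show ?thesis unfolding rl_mins_def length_y by simp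
qed

lemma rl_min_repeated_y_iff: "a < length t \<Longrightarrow> rl_min_repeated y a \<longleftrightarrow> rl_min_repeated t a"
  by (rule rl_min_repeated_cong) (simp_all add: y_nth_less rl_min_y_iff)

lemma not_rl_min_repeated_y_last: "\<not> rl_min_repeated y (length t)"
  unfolding rl_min_repeated_def using y_nth_less y_nth_last t_nth_le_asc
  by (metis add_le_same_cancel1 not_one_le_zero)

lemma is_ascent_y: "is_ascent y"
  unfolding is_ascent_def
proof (intro conjI allI impI)
  show "y \<noteq> []" "y ! 0 = 0"
    using ascent_nth_0[OF ascent_t] t_nonempty y_nth_less[of 0] by (simp_all add: y_def)
  fix i assume i: "0 < i \<and> i < length y"
  show "y ! i \<le> asc (take i y) + 1"
  proof (cases "i < length t")
    case True
    then show ?thesis using ascent_nth_le[OF ascent_t] i y_nth_less by (simp add: y_def)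
  next
    case False
    then have "i = length t" using i length_y by simp
    then show ?thesis by (simp add: y_def)
  qed
qed

lemma asc_y: "asc y = asc t + 1"
  using asc_snoc[of t "asc t + 1"] t_nonempty t_nth_le_asc[of "length t - 1"]
  by (simp add: y_def last_conv_nth)

lemma y_ends_with_asc_ascent: "sq y (length y - 1) < sq y (length y) \<and> sq y (length y) = asc y"
  using t_nth_le_asc[of "length t - 1"] t_nonempty asc_y
  by (simp add: sq_def length_y y_nth_less y_nth_last)

lemma set_y: "set y = insert (asc t + 1) (set t)"
  by (simp add: y_def)

lemma asc_Suc_notin_t: "asc t + 1 \<notin> set t"
  using t_nth_le_asc by (fastforce simp: in_set_conv_nth)

end

section \<open>The correspondence\<close>

definition T3_to_P1 :: "nat list \<Rightarrow> nat list" where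
  "T3_to_P1 x = (let P = Prm x (rpos x) - 1; t = take P x @ drop (Suc P) x in t @ [asc t + 1])"

definition P1_to_T3 :: "nat list \<Rightarrow> nat list" where
  "P1_to_T3 x = (let t = butlast x; q = Prm x (rpos x - 1) - 1; P = Prm x (rpos x) - 1
                 in take P t @ t ! q # drop P t)"

locale T3_P1_correspondence = rl_min_insertion t q P + ascent_extension t for t q P +
  assumes no_repeated_rl_min_after_P:
    "\<And>b. rl_min t b \<Longrightarrow> P < b \<Longrightarrow> b < length t \<Longrightarrow> \<not> rl_min_repeated t b"
begin

lemma rl_min_repeated_t_P: "rl_min_repeated t P"
proof -
  obtain j where "q < j" "j < P" "t ! j = t ! P" using between_hit by blast
  then show ?thesis unfolding rl_min_repeated_def using not_rl_min_t_between by auto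
qed

lemma rpos_s: "rpos s = r"
proof (rule rpos_eqI[OF rmin_s_neq_length])
  show "r < length (rl_mins s)" using Suc_r_less_length length_rl_mins_s by simp
  show "rl_min_repeated s (rl_mins s ! r)" using rl_mins_s_nth_r rl_min_repeated_s_P by simp
  fix m assume m: "r < m" "m < length (rl_mins s)"
  show "\<not> rl_min_repeated s (rl_mins s ! m)"
  proof (cases "m = Suc r")
    case True
    then show ?thesis using rl_mins_s_nth_r not_rl_min_repeated_s_Suc_P by simp
  next
    case False
    then obtain b where "rl_mins s ! m = Suc b" "P < b" "b < length t" "rl_min t b"
      using rl_mins_nth_above_r[of m] m length_rl_mins_s by (metis Suc_lessI)
    then show ?thesis using rl_min_repeated_s_Suc_iff no_repeated_rl_min_after_P by simp
  qed
qed

lemma rmin_y_neq_length: "rmin y \<noteq> length y"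
proof -
  obtain j where j: "q < j" "j < P" using between_hit by blast
  then have "\<not> rl_min y j" using rl_min_y_iff not_rl_min_t_between P_less_length by simp
  then have "length (filter (rl_min y) [0..<length y]) < length [0..<length y]"
    using j P_less_length length_y by (intro length_filter_less[of j]) auto
  then show ?thesis by (simp add: rmin_eq_length_rl_mins rl_mins_def)
qed

lemma rpos_y: "rpos y = Suc r"
proof (rule rpos_eqI[OF rmin_y_neq_length])
  show "Suc r < length (rl_mins y)" using Suc_r_less_length by (simp add: rl_mins_y)
  show "rl_min_repeated y (rl_mins y ! Suc r)"
    using Suc_r_less_length rl_mins_t_nth_r rl_min_repeated_t_P rl_min_repeated_y_iff P_less_length
    by (simp add: rl_mins_y nth_append)
  fix m assume m: "Suc r < m" "m < length (rl_mins y)"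
  show "\<not> rl_min_repeated y (rl_mins y ! m)"
  proof (cases "m < length (rl_mins t)")
    case True
    then obtain b where "rl_mins t ! m = b" "P < b" "b < length t" "rl_min t b"
      using rl_mins_nth_above_r[of m] m by metis
    then show ?thesis
      using True no_repeated_rl_min_after_P rl_min_repeated_y_iff by (simp add: rl_mins_y nth_append)
  next
    case False
    then have "m = length (rl_mins t)" using m by (simp add: rl_mins_y)
    then show ?thesis using not_rl_min_repeated_y_last by (simp add: rl_mins_y nth_append)
  qed
qed

lemma rmin_y: "rmin y = Suc (rmin s)"
  by (simp add: rmin_eq_length_rl_mins rl_mins_y length_rl_mins_s)

lemma Prm_s: "Prm s r = Suc P" "Prm s (Suc r) = Suc (Suc P)"
  using Prm_eq_rl_mins_nth[of _ s] Suc_r_less_length length_rl_mins_s rl_mins_s_nth_r by simp_all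

lemma Prm_y: "Prm y r = Suc q" "Prm y (Suc r) = Suc P"
  using Prm_eq_rl_mins_nth[of _ y] Suc_r_less_length rl_mins_t_nth_r
  by (simp_all add: rl_mins_y nth_append)

lemma Rmin_s: "Rmin s r = t ! q" "Rmin s (Suc r) = t ! P"
  using Rmin_eq_rl_mins_nth[of _ s] Suc_r_less_length length_rl_mins_s rl_mins_s_nth_r s_nth_P
    s_nth_Suc[of P] by simp_all

lemma is_ascent_s: "is_ascent s"
  unfolding is_ascent_def
proof (intro conjI allI impI)
  show "s \<noteq> []" "s ! 0 = 0" using length_s s_nth_less[of 0] q_less_P ascent_nth_0[OF ascent_t] by auto
  fix i assume i: "0 < i \<and> i < length s"
  consider "i < P" | "i = P" | "i = Suc P" | "Suc P < i" by linarith
  then show "s ! i \<le> asc (take i s) + 1"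
  proof cases
    case 1
    then show ?thesis using s_nth_less take_s ascent_nth_le[OF ascent_t] i P_less_length by simp
  next
    case 2
    then show ?thesis
      using s_nth_P take_s ascent_nth_le_asc_take[OF ascent_t, of P q] q_less_P P_less_length by simp
  next
    case 3
    then show ?thesis
      using s_nth_Suc[of P] asc_take_Suc_P_s ascent_nth_le[OF ascent_t, of P] Suc_q_less_P P_less_length
      by simp
  next
    case 4
    then have "0 < i - 1" "i - 1 < length t" using i length_s by auto
    then show ?thesis
      using 4 s_nth_greater asc_take_s_greater[of i] ascent_nth_le[OF ascent_t, of "i - 1"] i by simp
  qed
qed

text \<open>After position \<open>P\<close> the entries of \<open>s\<close> are those of the ascent sequence \<open>t\<close>, while \<open>s\<close> has
  one ascent more; so none of them reaches the bound \<open>asc + 1\<close>.\<close>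
lemma no_Masc_after_P:
  assumes "Suc P < i" "i \<le> length s"
  shows "\<not> is_Masc s i"
proof (cases "i = Suc (Suc P)")
  case True
  obtain j where "q < j" "j < P" "t ! j = t ! P" using between_hit by blast
  then have "t ! P \<le> asc (take P t)" using ascent_nth_le_asc_take[OF ascent_t, of P j] P_less_length by simp
  then show ?thesis using True s_nth_Suc[of P] asc_take_Suc_P_s unfolding is_Masc_def sq_def by simp
next
  case False
  then have "Suc P < i - 1" "i - 1 < length s" using assms by auto
  moreover have "t ! (i - 2) \<le> asc (take (i - 2) t) + 1"
    using ascent_nth_le[OF ascent_t, of "i - 2"] calculation length_s by simp
  ultimately show ?thesis
    using s_nth_greater[of "i - 1"] asc_take_s_greater[of "i - 1"] unfolding is_Masc_def sq_def
    by (simp add: numeral_2_eq_2)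
qed

lemma sebr_s: "sebr s = Rmin s (rpos s + 1)"
proof -
  define Q where "Q = {j. 1 \<le> j \<and> j < Suc P \<and> sq s j = t ! q}"
  define E where "E = {sq s j |j. Suc q < j \<and> j < Suc P}"
  have sq_s: "sq s j = t ! (j - 1)" if "1 \<le> j" "j < Suc P" for j
    using s_nth_less that by (simp add: sq_def)
  have "Suc q \<in> Q" unfolding Q_def using q_less_P sq_s[of "Suc q"] by simp
  have "Max Q = Suc q"
  proof (rule Max_eqI)
    show "finite Q" unfolding Q_def by (rule finite_subset[of _ "{..P}"]) auto
    fix j assume j: "j \<in> Q"
    show "j \<le> Suc q"
    proof (rule ccontr)
      assume "\<not> j \<le> Suc q"
      then have "t ! P \<le> t ! (j - 1)" using j between_ge unfolding Q_def by auto
      then show False using j sq_s value_q_less_value_P unfolding Q_def by auto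
    qed
  qed (rule \<open>Suc q \<in> Q\<close>)
  obtain j where j: "q < j" "j < P" "t ! j = t ! P" using between_hit by blast
  have "t ! P \<in> E" unfolding E_def using j sq_s[of "Suc j"] by (intro CollectI exI[of _ "Suc j"]) simp
  have "Min E = t ! P"
  proof (rule Min_eqI)
    show "finite E" unfolding E_def by (rule finite_image_set) simp
    fix e assume "e \<in> E"
    then obtain j where "e = sq s j" "Suc q < j" "j < Suc P" unfolding E_def by blast
    then show "t ! P \<le> e" using sq_s[of j] between_ge[of "j - 1"] by simp
  qed (rule \<open>t ! P \<in> E\<close>)
  have "sebr s = (if Q = {} then 0 else if E = {} then 0 else Min E)"
    unfolding sebr_def Let_def rpos_s Rmin_s Prm_s Q_def[symmetric] \<open>Max Q = Suc q\<close> E_def ..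
  also have "\<dots> = t ! P" using \<open>Suc q \<in> Q\<close> \<open>t ! P \<in> E\<close> \<open>Min E = t ! P\<close> by auto
  finally show ?thesis using Rmin_s rpos_s by simp
qed

lemma s_in_T3: "s \<in> T3"
  unfolding T3_def
proof (intro CollectI conjI allI impI)
  obtain j where j: "q < j" "j < P" "t ! j = t ! P" using between_hit by blast
  show "s \<in> Astar"
    using is_ascent_s neq_upt_if_nth_eq[of q P s] q_less_P P_less_length length_s s_nth_P s_nth_less
    by (simp add: Astar_def)
  have "length (filter (rl_min t) [0..<length t]) < length [0..<length t]"
    using not_rl_min_t_between[of j] j P_less_length by (intro length_filter_less[of j]) auto
  then show "length s \<noteq> rmin s + 1"
    using length_s length_rl_mins_s by (simp add: rmin_eq_length_rl_mins rl_mins_def)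
  show "rpos s + 1 < rmin s" using rpos_s Suc_r_less_length length_rl_mins_s rmin_eq_length_rl_mins by simp
  show "sebr s = Rmin s (rpos s + 1)" by (rule sebr_s)
  show "Prm s (rpos s + 1) = Prm s (rpos s) + 1" using rpos_s Prm_s by simp
  fix i assume "Prm s (rpos s) < i \<and> i \<le> length s"
  then show "\<not> is_Masc s i" using no_Masc_after_P rpos_s Prm_s by simp
qed

lemma y_in_P1: "y \<in> P1"
proof -
  obtain j where j: "q < j" "j < P" "t ! j = t ! P" using between_hit by blast
  then have "y \<noteq> [0..<length y]"
    using neq_upt_if_nth_eq[of j P y] P_less_length length_y y_nth_less by simp
  then show ?thesis using is_ascent_y y_ends_with_asc_ascent by (simp add: P1_def Astar_def)
qed

lemma T3_to_P1_s: "T3_to_P1 s = y"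
  unfolding T3_to_P1_def Let_def rpos_s Prm_s using take_s[of P] drop_Suc_P_s by (simp add: y_def)

lemma P1_to_T3_y: "P1_to_T3 y = s"
proof -
  have "butlast y = t" by (simp add: y_def)
  then show ?thesis unfolding P1_to_T3_def Let_def rpos_y using Prm_y by (simp add: s_def)
qed

lemma rep_s: "rep s = rep y + 1"
proof -
  have "card (set t) \<le> length t" by (rule card_length)
  moreover have "card (set y) = Suc (card (set t))" using set_y asc_Suc_notin_t by simp
  ultimately show ?thesis unfolding rep_def using set_s length_s length_y by simp
qed

lemma fixpoints_s: "{i. i < length s \<and> s ! i = i} = {i. i < P \<and> t ! i = i}"
proof -
  have "{i. i < length s \<and> s ! i = i} = {i. i < P \<and> s ! i = i}"
    using ascent_fixpoints_before_descent[OF is_ascent_s, of P] Suc_q_less_P P_less_length length_s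
      s_nth_P s_nth_less[of "P - 1"] value_before_P by simp
  then show ?thesis using s_nth_less by auto
qed

lemma fixpoints_y: "{i. i < length y \<and> y ! i = i} = {i. i < P \<and> t ! i = i}"
proof -
  have "{i. i < length y \<and> y ! i = i} = {i. i < P \<and> y ! i = i}"
    using ascent_fixpoints_before_descent[OF is_ascent_y, of P] Suc_q_less_P P_less_length length_y
      y_nth_less value_before_P by simp
  then show ?thesis using y_nth_less P_less_length by auto
qed

lemma amax_s_y: "amax s = card {i. i < P \<and> t ! i = i}" "amax y = card {i. i < P \<and> t ! i = i}"
  unfolding amax_eq_card_fixpoints fixpoints_s fixpoints_y by simp_all

lemma value_q_eq_0_iff: "t ! q = 0 \<longleftrightarrow> r = 0"
proof -
  have "0 \<in> set t" using ascent_nth_0[OF ascent_t] t_nonempty by (metis length_greater_0_conv nth_mem)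
  then show ?thesis using rl_min_value_eq_0_iff[of t r] Suc_r_less_length rl_mins_t_nth_r by simp
qed

lemma zero_s: "int (zero s) = int (zero y) + chi (rpos s = 0)"
proof -
  let ?zeros = "\<lambda>xs. length (filter (\<lambda>a::nat. a = 0) xs)"
  have "?zeros t = ?zeros (take P t) + ?zeros (drop P t)"
    by (metis append_take_drop_id filter_append length_append)
  moreover have "?zeros s = ?zeros (take P t) + (if t ! q = 0 then 1 else 0) + ?zeros (drop P t)"
    by (simp add: s_def)
  moreover have "?zeros y = ?zeros t" by (simp add: y_def)
  ultimately show ?thesis unfolding zero_eq_length_filter chi_def using value_q_eq_0_iff rpos_s by simp
qed

text \<open>Both \<open>ealm\<close> values read the entry at position \<open>amax\<close>, where \<open>s\<close> and \<open>y\<close> agree with \<open>t\<close>, unless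
  \<open>t\<close> starts with \<open>0, 1, \<dots>, P - 1\<close>; then \<open>t ! P = q + 1\<close> while \<open>s ! P = t ! q = q\<close>.\<close>
lemma ealm_s: "int (ealm s) = int (ealm y) - chi (Prm s (rpos s) = amax s + 1)"
proof -
  define F where "F = {i. i < P \<and> t ! i = i}"
  have "F \<subseteq> {..<P}" unfolding F_def by auto
  then have "card F \<le> P" using card_mono[of "{..<P}" F] by simp
  then have ealm: "ealm s = s ! card F" "ealm y = y ! card F"
    using amax_s_y P_less_length length_s length_y by (simp_all add: ealm_def F_def sq_def)
  show ?thesis
  proof (cases "card F < P")
    case True
    then show ?thesis using ealm s_nth_less y_nth_less P_less_length amax_s_y rpos_s Prm_s
      by (simp add: chi_def F_def)
  next
    case False
    then have "card F = P" using \<open>card F \<le> P\<close> by simp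
    then have "F = {..<P}" using \<open>F \<subseteq> {..<P}\<close> by (intro card_subset_eq) auto
    then have fixed: "\<And>i. i < P \<Longrightarrow> t ! i = i" unfolding F_def by auto
    have "t ! P \<le> t ! Suc q" using between_ge[of "Suc q"] Suc_q_less_P by simp
    then have "t ! P = Suc q" using value_q_less_value_P fixed[of q] fixed[of "Suc q"] Suc_q_less_P by simp
    then show ?thesis
      using ealm \<open>card F = P\<close> s_nth_P y_nth_less[of P] P_less_length fixed[of q] q_less_P amax_s_y
        rpos_s Prm_s by (simp add: chi_def F_def)
  qed
qed

lemma statistics:
  "asc s = asc y \<and> rep s = rep y + 1 \<and> amax s = amax y \<and>
   int (rmin s) = int (rmin y) - 1 \<and> int (rpos s) = int (rpos y) - 1 \<and>
   int (zero s) = int (zero y) + chi (rpos s = 0) \<and>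
   int (ealm s) = int (ealm y) - chi (Prm s (rpos s) = amax s + 1)"
  using asc_s asc_y rep_s amax_s_y rmin_y rpos_s rpos_y zero_s ealm_s by simp

lemma s_y_in_domains:
  "s \<in> T3 \<inter> Aseq (length s)" "y \<in> {x \<in> Aseq (length s) \<inter> P1. rpos x \<noteq> 0}"
  using s_in_T3 is_ascent_s y_in_P1 is_ascent_y rpos_y length_s length_y by (simp_all add: Aseq_def)

end

section \<open>Decomposing elements of \<open>T3\<close> and \<open>P1\<close>\<close>

locale T3_member =
  fixes x :: "nat list"
  assumes in_T3: "x \<in> T3"
begin

definition P :: nat where
  "P = rl_mins x ! rpos x"

definition q :: nat where
  "q = Max {j. 1 \<le> j \<and> j < Suc P \<and> sq x j = x ! P} - 1"

definition t :: "nat list" where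
  "t = take P x @ drop (Suc P) x"

lemma ascent_x: "is_ascent x"
  using in_T3 by (simp add: T3_def Astar_def)

lemma Suc_rpos_less: "Suc (rpos x) < length (rl_mins x)"
  using in_T3 by (simp add: T3_def rmin_eq_length_rl_mins)

lemma rl_mins_Suc_rpos: "rl_mins x ! Suc (rpos x) = Suc P"
  using in_T3 Suc_rpos_less Prm_eq_rl_mins_nth[of "rpos x" x] Prm_eq_rl_mins_nth[of "Suc (rpos x)" x]
  by (simp add: T3_def P_def)

lemma rl_min_P: "rl_min x P" "rl_min x (Suc P)" "Suc P < length x"
  using rl_mins_nth[of "rpos x" x] rl_mins_nth[of "Suc (rpos x)" x] Suc_rpos_less rl_mins_Suc_rpos
  by (auto simp: P_def)

lemma value_P_less: "x ! P < x ! Suc P"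
  using rl_min_P unfolding rl_min_def by simp

text \<open>Unfolding \<open>sebr\<close>: since \<open>sebr x = x ! Suc P > x ! P \<ge> 0\<close>, the value \<open>x ! P\<close> occurs before
  \<open>P\<close>, and the minimum strictly between its last such occurrence \<open>q\<close> and \<open>P\<close> is \<open>x ! Suc P\<close>.\<close>
lemma last_copy_before_P:
  "q < P" "x ! q = x ! P" "\<And>k. q < k \<Longrightarrow> k < P \<Longrightarrow> x ! Suc P \<le> x ! k"
  "\<exists>k. q < k \<and> k < P \<and> x ! k = x ! Suc P"
proof -
  define Q where "Q = {j. 1 \<le> j \<and> j < Suc P \<and> sq x j = x ! P}"
  define E where "E = {sq x j |j. Max Q < j \<and> j < Suc P}"
  have "Rmin x (rpos x) = x ! P" "Rmin x (Suc (rpos x)) = x ! Suc P" "Prm x (rpos x) = Suc P"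
    using Rmin_eq_rl_mins_nth Prm_eq_rl_mins_nth Suc_rpos_less rl_mins_Suc_rpos by (simp_all add: P_def)
  then have "sebr x = (if Q = {} then 0 else if E = {} then 0 else Min E)"
    unfolding sebr_def Let_def Q_def E_def by presburger
  moreover have "sebr x = x ! Suc P"
    using in_T3 \<open>Rmin x (Suc (rpos x)) = x ! Suc P\<close> by (simp add: T3_def)
  ultimately have "Q \<noteq> {}" "E \<noteq> {}" "Min E = x ! Suc P"
    using value_P_less by (auto split: if_splits)
  have "finite Q" unfolding Q_def by (rule finite_subset[of _ "{..P}"]) auto
  then have "Max Q \<in> Q" using \<open>Q \<noteq> {}\<close> by simp
  then show "q < P" "x ! q = x ! P" unfolding Q_def q_def by (auto simp: sq_def)
  have "Max Q = Suc q" using \<open>Max Q \<in> Q\<close> unfolding Q_def q_def by auto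
  have "finite E" unfolding E_def by (rule finite_image_set) simp
  show "x ! Suc P \<le> x ! k" if "q < k" "k < P" for k
  proof -
    have "sq x (Suc k) \<in> E" unfolding E_def using that \<open>Max Q = Suc q\<close> by auto
    then show ?thesis using Min_le[OF \<open>finite E\<close>] \<open>Min E = x ! Suc P\<close> by (fastforce simp: sq_def)
  qed
  have "Min E \<in> E" using \<open>finite E\<close> \<open>E \<noteq> {}\<close> by simp
  then obtain j where "Min E = sq x j" "Max Q < j" "j < Suc P" unfolding E_def by blast
  then show "\<exists>k. q < k \<and> k < P \<and> x ! k = x ! Suc P"
    using \<open>Max Q = Suc q\<close> \<open>Min E = x ! Suc P\<close> by (intro exI[of _ "j - 1"]) (auto simp: sq_def)
qed

lemma length_t: "length t = length x - 1"
  using rl_min_P by (simp add: t_def)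

lemma t_nth_less: "i < P \<Longrightarrow> t ! i = x ! i"
  using rl_min_P by (simp add: t_def nth_append)

lemma t_nth_ge: "P \<le> i \<Longrightarrow> i < length t \<Longrightarrow> t ! i = x ! Suc i"
  using rl_min_P length_t by (simp add: t_def nth_append)

lemma insertion: "rl_min_insertion t q P"
proof
  show "q < P" "P < length t" using last_copy_before_P(1) length_t rl_min_P by simp_all
  show "rl_min t q" unfolding rl_min_def
  proof (intro allI impI)
    fix j assume j: "q < j \<and> j < length t"
    show "t ! q < t ! j"
    proof (cases "j < P")
      case True
      then show ?thesis
        using t_nth_less last_copy_before_P(1,2) last_copy_before_P(3)[of j] j value_P_less by simp
    next
      case False
      then have "P < Suc j" "Suc j < length x" using j length_t by linarith+
      then have "x ! P < x ! Suc j" using rl_min_P unfolding rl_min_def by simp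
      then show ?thesis using t_nth_less last_copy_before_P(1,2) t_nth_ge[of j] j False by simp
    qed
  qed
  show "rl_min t P" unfolding rl_min_def
    using rl_min_P(2) length_t t_nth_ge[of P] t_nth_ge unfolding rl_min_def by auto
  show "t ! P \<le> t ! j" if "q < j" "j < P" for j
    using t_nth_ge[of P] t_nth_less last_copy_before_P(3) length_t rl_min_P that by simp
  show "\<exists>j. q < j \<and> j < P \<and> t ! j = t ! P"
    using last_copy_before_P(4) t_nth_less t_nth_ge[of P] length_t rl_min_P by auto
qed

interpretation ins: rl_min_insertion t q P
  by (rule insertion)

lemma s_eq_x: "ins.s = x"
proof -
  have "take P t = take P x" "drop P t = drop (Suc P) x" "t ! q = x ! P"
    using rl_min_P t_nth_less last_copy_before_P(1,2) by (simp_all add: t_def)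
  then show ?thesis using id_take_nth_drop[of P x] rl_min_P by (simp add: ins.s_def)
qed

text \<open>Deleting \<open>x ! P\<close> lowers the ascent count of every longer prefix by one, and the absence of
  Masc positions after \<open>P\<close> is exactly the slack needed to keep the later entries admissible.\<close>
lemma ascent_t: "is_ascent t"
  unfolding is_ascent_def
proof (intro conjI allI impI)
  show "t \<noteq> []" "t ! 0 = 0"
    using length_t rl_min_P t_nth_less[of 0] last_copy_before_P(1) ascent_nth_0[OF ascent_x] by auto
  fix i assume i: "0 < i \<and> i < length t"
  show "t ! i \<le> asc (take i t) + 1"
  proof (cases "i < P")
    case True
    moreover have "i < length x" using i length_t by linarith
    ultimately show ?thesis
      using ins.take_s[of i] s_eq_x t_nth_less ascent_nth_le[OF ascent_x, of i] i by simp
  next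
    case False
    have "Suc i < length x" using i length_t by linarith
    have "\<not> is_Masc x (Suc (Suc i))"
      using in_T3 False \<open>Suc i < length x\<close> Prm_eq_rl_mins_nth[of "rpos x" x] Suc_rpos_less
      unfolding T3_def P_def by auto
    then have "t ! i \<le> asc (take (Suc i) x)"
      using ascent_nth_le[OF ascent_x, of "Suc i"] t_nth_ge[of i] False i \<open>Suc i < length x\<close>
      unfolding is_Masc_def sq_def by simp
    moreover have "asc (take (Suc i) x) \<le> asc (take i t) + 1"
      using ins.asc_take_Suc_P_s ins.asc_take_s_greater[of "Suc i"] s_eq_x i ins.length_s False
      by (cases "i = P") simp_all
    ultimately show ?thesis by simp
  qed
qed

lemma no_repeated_rl_min_after_P:
  assumes "rl_min t b" "P < b" "b < length t"
  shows "\<not> rl_min_repeated t b"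
proof -
  have "b \<in> set ins.rl_mins_after_P" using assms by (simp add: ins.rl_mins_after_P_def)
  then obtain i where i: "i < length ins.rl_mins_after_P" "ins.rl_mins_after_P ! i = b"
    by (auto simp: in_set_conv_nth)
  define m where "m = Suc (Suc ins.r) + i"
  have "rl_mins x = rl_mins ins.s" using s_eq_x by simp
  then have "m < length (rl_mins x)" "rl_mins x ! m = Suc b"
    using i by (simp_all add: m_def ins.rl_mins_s ins.r_def nth_append)
  moreover have "rpos x = ins.r"
    using s_eq_x ins.rl_mins_s_nth_r(1) distinct_rl_mins[of x] Suc_rpos_less ins.Suc_r_less_length
      ins.length_rl_mins_s nth_eq_iff_index_eq[of "rl_mins x" "ins.r" "rpos x"]
    by (simp add: P_def)
  ultimately have "\<not> rl_min_repeated x (Suc b)"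
    using not_rl_min_repeated_above_rpos[of x m] ins.rmin_s_neq_length s_eq_x by (simp add: m_def)
  then show ?thesis using ins.rl_min_repeated_s_Suc_iff assms s_eq_x by simp
qed

lemma correspondence: "T3_P1_correspondence t q P"
  using insertion ascent_t no_repeated_rl_min_after_P
  by (simp add: T3_P1_correspondence_def T3_P1_correspondence_axioms_def ascent_extension_def)

end

lemma T3_decomposition:
  assumes "x \<in> T3"
  shows "\<exists>t q P. T3_P1_correspondence t q P \<and> x = rl_min_insertion.s t q P"
  using T3_member.correspondence T3_member.s_eq_x T3_member.intro[OF assms] by metis

locale P1_member =
  fixes x :: "nat list"
  assumes in_P1: "x \<in> P1" and rpos_nonzero: "rpos x \<noteq> 0"
begin

definition t :: "nat list" where
  "t = butlast x"

definition q :: nat where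
  "q = rl_mins t ! (rpos x - 1)"

definition P :: nat where
  "P = rl_mins t ! rpos x"

lemma ascent_x: "is_ascent x"
  using in_P1 by (simp add: P1_def Astar_def)

lemma length_x: "2 \<le> length x"
proof -
  have "x \<noteq> []" using ascent_x unfolding is_ascent_def by simp
  moreover have "length x \<noteq> 1" using in_P1 by (auto simp: P1_def sq_def)
  ultimately show ?thesis by (metis One_nat_def length_0_conv less_2_cases not_le)
qed

lemma x_eq: "x = t @ [asc t + 1]"
proof -
  have "x \<noteq> []" using length_x by auto
  then have x: "x = t @ [last x]" by (simp add: t_def)
  have "length t = length x - 1" by (simp add: t_def)
  then have "t \<noteq> []" using length_x by (cases t) auto
  then have "last t = sq x (length x - 1)" "last x = sq x (length x)"
    using length_x \<open>x \<noteq> []\<close> by (simp_all add: t_def sq_def last_conv_nth nth_butlast)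
  then have "asc x = asc t + 1" using asc_snoc[of t "last x"] x \<open>t \<noteq> []\<close> in_P1 by (simp add: P1_def)
  then show ?thesis using x in_P1 \<open>last x = sq x (length x)\<close> by (simp add: P1_def)
qed

lemma ascent_t: "is_ascent t"
  using is_ascent_take[OF ascent_x, of "length x - 1"] length_x by (simp add: t_def butlast_conv_take)

interpretation ext: ascent_extension t
  by (rule ascent_extension.intro[OF ascent_t])

lemma y_eq_x: "ext.y = x"
  using x_eq by (simp add: ext.y_def)

lemma rl_mins_x: "rl_mins x = rl_mins t @ [length t]"
  using ext.rl_mins_y y_eq_x by simp

lemma rpos_x: "rmin x \<noteq> length x" "rpos x < length (rl_mins t)"
  "rl_min_repeated t P"
proof -
  have rp: "rmin x \<noteq> length x" "rpos x < length (rl_mins x)" "rl_min_repeated x (rl_mins x ! rpos x)"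
    using rpos_nonzero_D[OF rpos_nonzero] by auto
  then show "rmin x \<noteq> length x" by simp
  show "rpos x < length (rl_mins t)"
  proof (rule ccontr)
    assume "\<not> rpos x < length (rl_mins t)"
    then have "rl_mins x ! rpos x = length t" using rp rl_mins_x by (simp add: nth_append)
    then show False using rp ext.not_rl_min_repeated_y_last y_eq_x by simp
  qed
  then show "rl_min_repeated t P"
    using rp rl_mins_x ext.rl_min_repeated_y_iff y_eq_x rl_mins_nth[of "rpos x" t]
    by (simp add: P_def nth_append)
qed

text \<open>Any entry between \<open>q\<close> and \<open>P\<close> below \<open>t ! P\<close> would be followed by a right-to-left minimum
  strictly between the consecutive right-to-left minima \<open>q\<close> and \<open>P\<close>.\<close>
lemma between_ge: "q < j \<Longrightarrow> j < P \<Longrightarrow> t ! P \<le> t ! j"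
proof (rule ccontr)
  assume j: "q < j" "j < P" and "\<not> t ! P \<le> t ! j"
  have P: "P < length t" "rl_min t P" using rl_mins_nth rpos_x by (auto simp: P_def)
  obtain k where k: "j \<le> k" "k < length t" "rl_min t k" "t ! k \<le> t ! j"
    using exists_rl_min_right_le[of j t] j P by auto
  have "k < P"
  proof (rule ccontr)
    assume "\<not> k < P"
    then consider "k = P" | "P < k" by linarith
    then have "t ! P \<le> t ! k" using P k unfolding rl_min_def by cases auto
    then show False using k \<open>\<not> t ! P \<le> t ! j\<close> by simp
  qed
  then have "k \<le> q" using rl_min_before_rl_mins_nth[of "rpos x" t k] rpos_x k by (simp add: P_def q_def)
  then show False using j k by simp
qed

lemma insertion: "rl_min_insertion t q P"
proof
  show "q < P" "P < length t" "rl_min t q" "rl_min t P"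
    using rl_mins_nth_less_iff[of "rpos x - 1" t "rpos x"] rl_mins_nth[of _ t] rpos_x rpos_nonzero
    by (auto simp: q_def P_def)
  obtain j where j: "j < P" "t ! j = t ! P" "\<forall>k. j \<le> k \<and> k < P \<longrightarrow> \<not> rl_min t k"
    using rpos_x(3) unfolding rl_min_repeated_def by blast
  then have "q < j" using \<open>q < P\<close> \<open>rl_min t q\<close> by (meson not_le)
  then show "\<exists>j. q < j \<and> j < P \<and> t ! j = t ! P" using j by blast
qed (rule between_ge)

lemma no_repeated_rl_min_after_P:
  assumes "rl_min t b" "P < b" "b < length t"
  shows "\<not> rl_min_repeated t b"
proof -
  obtain m where m: "m < length (rl_mins t)" "rl_mins t ! m = b" using rl_mins_index assms by blast
  then have "rpos x < m" using rl_mins_nth_less_iff[of "rpos x" t m] rpos_x assms by (simp add: P_def)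
  then have "\<not> rl_min_repeated x b"
    using not_rl_min_repeated_above_rpos[of x m] rpos_x m rl_mins_x by (simp add: nth_append)
  then show ?thesis using ext.rl_min_repeated_y_iff assms y_eq_x by simp
qed

lemma correspondence: "T3_P1_correspondence t q P"
  using insertion ascent_t no_repeated_rl_min_after_P
  by (simp add: T3_P1_correspondence_def T3_P1_correspondence_axioms_def ascent_extension_def)

end

lemma P1_decomposition:
  assumes "x \<in> P1" "rpos x \<noteq> 0"
  shows "\<exists>t q P. T3_P1_correspondence t q P \<and> x = ascent_extension.y t"
  using P1_member.correspondence P1_member.y_eq_x P1_member.intro[OF assms] by metis

theorem mainTheorem11:
  fixes n :: nat
  shows "\<exists>f3. bij_betw f3 (T3 \<inter> Aseq n) {s \<in> Aseq n \<inter> P1. rpos s \<noteq> 0} \<and>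
    (\<forall>s \<in> T3 \<inter> Aseq n.
       asc s = asc (f3 s) \<and>
       rep s = rep (f3 s) + 1 \<and>
       amax s = amax (f3 s) \<and>
       int (rmin s) = int (rmin (f3 s)) - 1 \<and>
       int (rpos s) = int (rpos (f3 s)) - 1 \<and>
       int (zero s) = int (zero (f3 s)) + chi (rpos s = 0) \<and>
       int (ealm s) = int (ealm (f3 s)) - chi (Prm s (rpos s) = amax s + 1))"
    (is "\<exists>f3. bij_betw f3 ?A ?B \<and> (\<forall>s\<in>?A. ?statistics f3 s)")
proof -
  have forward: "T3_to_P1 x \<in> ?B \<and> P1_to_T3 (T3_to_P1 x) = x \<and> ?statistics T3_to_P1 x"
    if x: "x \<in> ?A" for x
  proof -
    obtain t q P where "T3_P1_correspondence t q P" "x = rl_min_insertion.s t q P"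
      using T3_decomposition x by blast
    then interpret T3_P1_correspondence t q P by simp
    show ?thesis
      using \<open>x = s\<close> x s_y_in_domains statistics T3_to_P1_s P1_to_T3_y by (simp add: Aseq_def)
  qed
  have backward: "P1_to_T3 y \<in> ?A \<and> T3_to_P1 (P1_to_T3 y) = y" if y: "y \<in> ?B" for y
  proof -
    obtain t q P where "T3_P1_correspondence t q P" "y = ascent_extension.y t"
      using P1_decomposition y by blast
    then interpret T3_P1_correspondence t q P by simp
    show ?thesis
      using \<open>y = ascent_extension.y t\<close> y s_y_in_domains T3_to_P1_s P1_to_T3_y length_s length_y
      by (simp add: Aseq_def)
  qed
  have "bij_betw T3_to_P1 ?A ?B"
    by (rule bij_betw_byWitness[where f' = P1_to_T3]) (use forward backward in blast)+
  then show ?thesis using forward by blast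
qed

end
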